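(* The quaternionic Grothendieck constant is at most the complex Grothendieck constant: $K_G^{\mathbb{H}}\le K_G^{\mathbb{C}}$.
   Context: $\mathbb{H}$ denotes the quaternions, with conjugation $\bar a$, modulus $|a|=\sqrt{a\bar a}$ and real part $\Re a$. A right quaternionic Hilbert space $\mathcal{H}$ is a right $\mathbb{H}$-vector space with a map $\langle\cdot,\cdot\rangle:\mathcal{H}\times\mathcal{H}\to\mathbb{H}$ satisfying $\langle y,x\rangle=\overline{\langle x,y\rangle}$, $\langle xa+yb,z\rangle=\bar a\langle x,z\rangle+\bar b\langle y,z\rangle$, $\langle z,xa+yb\rangle=\langle z,x\rangle a+\langle z,y\rangle b$, and $\langle x,x\rangle>0$ for $x\neq 0$; $\|x\|=\sqrt{\langle x,x\rangle}$. For $M=(M_{ij})\in\mathbb{H}^{m\times n}$ define $\|M\|_{\infty,1,\mathbb{H}}=\max\{|\sum_{i,j}M_{ij}\bar\varepsilon_i\delta_j| : \varepsilon_i,\delta_j\in\mathbb{H},\ |\varepsilon_i|=|\delta_j|=1\}$ and $\|M\|_{G,\mathbb{H}}=\sup\{|\sum_{i,j}M_{ij}\langle x_i,y_j\rangle| : x_i,y_j\in\mathcal{H},\ \|x_i\|=\|y_j\|=1\}$, the supremum being over all right quaternionic Hilbert spaces $\mathcal{H}$ and unit vectors in them. $K_G^{\mathbb{H}}$ is the smallest constant $K$ such that $\|M\|_{G,\mathbb{H}}\le K\|M\|_{\infty,1,\mathbb{H}}$ for all $m,n$ and all $M\in\mathbb{H}^{m\times n}$. $K_G^{\mathbb{C}}$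 is the classical complex Grothendieck constant, defined analogously with $\mathbb{C}$ in place of $\mathbb{H}$ (complex unit scalars, complex Hilbert spaces). *)

theory Defs
  imports "HOL-Analysis.Analysis"
begin

text \<open>A quaternion Quat a b c d stands for a + b i + c j + d k.\<close>
datatype quat = Quat (qre: real) (qi: real) (qj: real) (qk: real)

definition qzero :: quat where "qzero = Quat 0 0 0 0"

definition qadd :: "quat \<Rightarrow> quat \<Rightarrow> quat" where
  "qadd p q = Quat (qre p + qre q) (qi p + qi q) (qj p + qj q) (qk p + qk q)"

text \<open>Hamilton product (i^2 = j^2 = k^2 = ijk = -1).\<close>
definition qmult :: "quat \<Rightarrow> quat \<Rightarrow> quat" where
  "qmult p q = Quat
     (qre p * qre q - qi p * qi q - qj p * qj q - qk p * qk q)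
     (qre p * qi q + qi p * qre q + qj p * qk q - qk p * qj q)
     (qre p * qj q - qi p * qk q + qj p * qre q + qk p * qi q)
     (qre p * qk q + qi p * qj q - qj p * qi q + qk p * qre q)"

definition qcnj :: "quat \<Rightarrow> quat" where
  "qcnj q = Quat (qre q) (- qi q) (- qj q) (- qk q)"

text \<open>Modulus |a| = sqrt(a conj(a)) (a conj(a) is real).\<close>
definition qnorm :: "quat \<Rightarrow> real" where
  "qnorm q = sqrt (qre (qmult q (qcnj q)))"

definition qsum :: "('a \<Rightarrow> quat) \<Rightarrow> 'a set \<Rightarrow> quat" where
  "qsum f A = Quat (\<Sum>a\<in>A. qre (f a)) (\<Sum>a\<in>A. qi (f a)) (\<Sum>a\<in>A. qj (f a)) (\<Sum>a\<in>A. qk (f a))"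

text \<open>Vectors of H^d are functions nat => quat, only coordinates < d matter.
  Inner product <x,y> = sum_k conj(x_k) y_k (conjugate-linear in the first,
  right-linear in the second argument).\<close>
definition qinner :: "nat \<Rightarrow> (nat \<Rightarrow> quat) \<Rightarrow> (nat \<Rightarrow> quat) \<Rightarrow> quat" where
  "qinner d x y = qsum (\<lambda>k. qmult (qcnj (x k)) (y k)) {..<d}"

definition qvnorm :: "nat \<Rightarrow> (nat \<Rightarrow> quat) \<Rightarrow> real" where
  "qvnorm d x = sqrt (qre (qinner d x x))"

definition norm_inf1_H :: "nat \<Rightarrow> nat \<Rightarrow> (nat \<Rightarrow> nat \<Rightarrow> quat) \<Rightarrow> real" where
  "norm_inf1_H m n M = Sup {qnorm (qsum (\<lambda>(i,j). qmult (qmult (M i j) (qcnj (eps i))) (dlt j))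
                                    ({..<m} \<times> {..<n})) | eps dlt.
       (\<forall>i<m. qnorm (eps i) = 1) \<and> (\<forall>j<n. qnorm (dlt j) = 1)}"

definition norm_G_H :: "nat \<Rightarrow> nat \<Rightarrow> (nat \<Rightarrow> nat \<Rightarrow> quat) \<Rightarrow> real" where
  "norm_G_H m n M = Sup {qnorm (qsum (\<lambda>(i,j). qmult (M i j) (qinner d (x i) (y j)))
                                    ({..<m} \<times> {..<n})) | d x y.
       (\<forall>i<m. qvnorm d (x i) = 1) \<and> (\<forall>j<n. qvnorm d (y j) = 1)}"

definition KG_H :: ereal where
  "KG_H = Inf {ereal K | K. \<forall>m n (M :: nat \<Rightarrow> nat \<Rightarrow> quat).
                 norm_G_H m n M \<le> K * norm_inf1_H m n M}"

definition cinner :: "nat \<Rightarrow> (nat \<Rightarrow> complex) \<Rightarrow> (nat \<Rightarrow> complex) \<Rightarrow> complex" where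
  "cinner d x y = (\<Sum>k<d. cnj (x k) * y k)"

definition cvnorm :: "nat \<Rightarrow> (nat \<Rightarrow> complex) \<Rightarrow> real" where
  "cvnorm d x = sqrt (Re (cinner d x x))"

definition norm_inf1_C :: "nat \<Rightarrow> nat \<Rightarrow> (nat \<Rightarrow> nat \<Rightarrow> complex) \<Rightarrow> real" where
  "norm_inf1_C m n M = Sup {cmod (\<Sum>i<m. \<Sum>j<n. M i j * cnj (eps i) * dlt j) | eps dlt.
       (\<forall>i<m. cmod (eps i) = 1) \<and> (\<forall>j<n. cmod (dlt j) = 1)}"

definition norm_G_C :: "nat \<Rightarrow> nat \<Rightarrow> (nat \<Rightarrow> nat \<Rightarrow> complex) \<Rightarrow> real" where
  "norm_G_C m n M = Sup {cmod (\<Sum>i<m. \<Sum>j<n. M i j * cinner d (x i) (y j)) | d x y.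
       (\<forall>i<m. cvnorm d (x i) = 1) \<and> (\<forall>j<n. cvnorm d (y j) = 1)}"

definition KG_C :: ereal where
  "KG_C = Inf {ereal K | K. \<forall>m n (M :: nat \<Rightarrow> nat \<Rightarrow> complex).
                 norm_G_C m n M \<le> K * norm_inf1_C m n M}"

end

theory Submission
  imports Defs
begin

(* Write a quaternion as q = z + w j with z, w complex and replace it by the complex 2 x 2 matrix
   [[z, -conj w], [w, conj z]]. Doing this entrywise turns an m x n quaternionic matrix M into a
   2m x 2n complex matrix, and the matrix whose rows are unit vectors x_i of H^d into one whose
   2m rows are unit vectors of C^(2d). Real parts survive up to a factor 2: the real part of the
   complex Grothendieck sum is 2 Re sum M_ij <x_i, y_j>, while the complex (infinity,1)-norm of the
   representation is at most twice the quaternionic one, because a pair of unimodular complex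
   numbers is sqrt 2 times a unit quaternion. So any complex constant K bounds
   Re sum M_ij <x_i, y_j> by K ||M||_(infinity,1), and multiplying M on the left by a suitable
   unit quaternion, which leaves ||M||_(infinity,1) unchanged, turns the real part into the
   modulus. *)

lemma qsum_components:
  "qre (qsum f A) = (\<Sum>a\<in>A. qre (f a))" "qi (qsum f A) = (\<Sum>a\<in>A. qi (f a))"
  "qj (qsum f A) = (\<Sum>a\<in>A. qj (f a))" "qk (qsum f A) = (\<Sum>a\<in>A. qk (f a))"
  by (simp_all add: qsum_def)

lemma qmult_components:
  "qre (qmult p q) = qre p * qre q - qi p * qi q - qj p * qj q - qk p * qk q"
  "qi (qmult p q) = qre p * qi q + qi p * qre q + qj p * qk q - qk p * qj q"
  "qj (qmult p q) = qre p * qj q - qi p * qk q + qj p * qre q + qk p * qi q"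
  "qk (qmult p q) = qre p * qk q + qi p * qj q - qj p * qi q + qk p * qre q"
  by (simp_all add: qmult_def)

lemma qcnj_components:
  "qre (qcnj q) = qre q" "qi (qcnj q) = - qi q" "qj (qcnj q) = - qj q" "qk (qcnj q) = - qk q"
  by (simp_all add: qcnj_def)

lemma qmult_assoc: "qmult (qmult p q) r = qmult p (qmult q r)"
  by (simp add: quat.expand qmult_components algebra_simps)

lemma qmult_qsum_right: "qmult p (qsum f A) = qsum (\<lambda>a. qmult p (f a)) A"
  by (simp add: quat.expand qmult_components qsum_components sum_distrib_left
      sum_subtractf[symmetric] sum.distrib[symmetric])

lemma qnorm_altdef: "qnorm q = sqrt ((qre q)\<^sup>2 + (qi q)\<^sup>2 + (qj q)\<^sup>2 + (qk q)\<^sup>2)"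
  by (simp add: qnorm_def qmult_components qcnj_components power2_eq_square)

lemma qnorm_qmult: "qnorm (qmult p q) = qnorm p * qnorm q"
  unfolding qnorm_altdef real_sqrt_mult[symmetric]
  by (rule arg_cong[where f = sqrt]) (simp add: qmult_components power2_eq_square; algebra)

lemma qnorm_qcnj: "qnorm (qcnj q) = qnorm q"
  by (simp add: qnorm_altdef qcnj_components)

lemma qnorm_one: "qnorm (Quat 1 0 0 0) = 1"
  by (simp add: qnorm_altdef)

lemma abs_qre_le_qnorm: "\<bar>qre q\<bar> \<le> qnorm q"
  unfolding qnorm_altdef by (rule real_le_rsqrt) simp

lemma exists_unit_qre_qmult_eq_qnorm:
  obtains u where "qnorm u = 1" "qre (qmult u q) = qnorm q"
proof (cases "qnorm q = 0")
  case True
  then have "qre q = 0"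
    using abs_qre_le_qnorm[of q] by simp
  with True show ?thesis
    by (intro that[of "Quat 1 0 0 0"] qnorm_one) (simp add: qmult_components)
next
  case False
  define r where "r = qnorm q"
  have "0 \<le> r"
    unfolding r_def qnorm_altdef by simp
  with False have r_pos: "r > 0"
    by (simp add: r_def)
  have r_sq: "(qre q)\<^sup>2 + (qi q)\<^sup>2 + (qj q)\<^sup>2 + (qk q)\<^sup>2 = r\<^sup>2"
    unfolding r_def qnorm_altdef by simp
  define u where "u = Quat (qre q / r) (- qi q / r) (- qj q / r) (- qk q / r)"
  have "qnorm u = 1"
    using r_pos unfolding u_def qnorm_altdef
    by (simp add: power_divide add_divide_distrib[symmetric] r_sq)
  moreover have "qre (qmult u q) = qnorm q"
    using r_pos r_sq
    by (simp add: u_def qmult_components r_def[symmetric] power2_eq_square add_divide_distrib[symmetric])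
  ultimately show ?thesis
    by (rule that)
qed

(* q = qfst q + qsnd q j *)
definition qfst :: "quat \<Rightarrow> complex" where "qfst q = Complex (qre q) (qi q)"
definition qsnd :: "quat \<Rightarrow> complex" where "qsnd q = Complex (qj q) (qk q)"

lemma qfst_qsum: "qfst (qsum f A) = (\<Sum>a\<in>A. qfst (f a))"
  by (simp add: qfst_def qsum_components complex_eq_iff)

lemma qsnd_qsum: "qsnd (qsum f A) = (\<Sum>a\<in>A. qsnd (f a))"
  by (simp add: qsnd_def qsum_components complex_eq_iff)

lemma qnorm_eq_norm_pair: "qnorm q = norm (qfst q, qsnd q)"
  by (simp add: qnorm_altdef norm_prod_def qfst_def qsnd_def cmod_power2 add.assoc)

lemma qnorm_qsum_le: "qnorm (qsum f A) \<le> (\<Sum>a\<in>A. qnorm (f a))"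
proof -
  have "(qfst (qsum f A), qsnd (qsum f A)) = (\<Sum>a\<in>A. (qfst (f a), qsnd (f a)))"
    by (simp add: qfst_qsum qsnd_qsum prod_eq_iff fst_sum snd_sum)
  then show ?thesis
    unfolding qnorm_eq_norm_pair by (metis norm_sum)
qed

lemma norm_inf1_H_upper:
  assumes "\<forall>i<m. qnorm (eps i) = 1" "\<forall>j<n. qnorm (dlt j) = 1"
  shows "qnorm (qsum (\<lambda>(i, j). qmult (qmult (M i j) (qcnj (eps i))) (dlt j)) ({..<m} \<times> {..<n}))
    \<le> norm_inf1_H m n M"
  unfolding norm_inf1_H_def using assms
  by (intro cSup_upper bdd_aboveI[where M = "\<Sum>(i, j)\<in>{..<m} \<times> {..<n}. qnorm (M i j)"])
    (auto intro!: order_trans[OF qnorm_qsum_le] sum_mono simp: qnorm_qmult qnorm_qcnj)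

lemma norm_inf1_H_qmult_unit:
  assumes "qnorm u = 1"
  shows "norm_inf1_H m n (\<lambda>i j. qmult u (M i j)) = norm_inf1_H m n M"
proof -
  have "qsum (\<lambda>(i, j). qmult (qmult (qmult u (M i j)) (qcnj (eps i))) (dlt j)) A
      = qmult u (qsum (\<lambda>(i, j). qmult (qmult (M i j) (qcnj (eps i))) (dlt j)) A)" for eps dlt A
    by (simp add: qmult_qsum_right qmult_assoc case_prod_unfold)
  then show ?thesis
    by (simp add: norm_inf1_H_def qnorm_qmult assms)
qed

lemma Re_cinner_self: "Re (cinner d x x) = (\<Sum>k<d. (cmod (x k))\<^sup>2)"
  unfolding cinner_def Re_sum
  by (intro sum.cong refl) (subst cmod_power2, simp add: power2_eq_square)

lemma cmod_cinner_le_1: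
  assumes "cvnorm d x = 1" "cvnorm d y = 1"
  shows "cmod (cinner d x y) \<le> 1"
proof -
  have unit: "(\<Sum>k<d. (cmod (x k))\<^sup>2) = 1" "(\<Sum>k<d. (cmod (y k))\<^sup>2) = 1"
    using assms by (simp_all add: cvnorm_def Re_cinner_self)
  have "cmod (cinner d x y) \<le> (\<Sum>k<d. cmod (x k) * cmod (y k))"
    unfolding cinner_def by (rule order_trans[OF norm_sum]) (simp add: norm_mult)
  also have "\<dots> \<le> (\<Sum>k<d. ((cmod (x k))\<^sup>2 + (cmod (y k))\<^sup>2) / 2)"
  proof (rule sum_mono)
    fix k
    show "cmod (x k) * cmod (y k) \<le> ((cmod (x k))\<^sup>2 + (cmod (y k))\<^sup>2) / 2"
      using sum_squares_bound[of "cmod (x k)" "cmod (y k)"] by simp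
  qed
  also have "\<dots> = 1"
    using unit by (simp add: sum_divide_distrib[symmetric] sum.distrib)
  finally show ?thesis .
qed

lemma norm_G_C_upper:
  assumes "\<forall>i<m. cvnorm d (x i) = 1" "\<forall>j<n. cvnorm d (y j) = 1"
  shows "cmod (\<Sum>i<m. \<Sum>j<n. M i j * cinner d (x i) (y j)) \<le> norm_G_C m n M"
  unfolding norm_G_C_def using assms
  by (intro cSup_upper bdd_aboveI[where M = "\<Sum>i<m. \<Sum>j<n. cmod (M i j)"])
    (auto intro!: order_trans[OF norm_sum] sum_mono mult_left_le cmod_cinner_le_1 simp: norm_mult)

lemma complex_Grothendieck_bound_ge_1:
  assumes "\<forall>m n M. norm_G_C m n M \<le> K * norm_inf1_C m n M"
  shows "1 \<le> K"
proof -
  define one where "one = (\<lambda>(_::nat) (_::nat). 1::complex)"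
  have "1 \<le> norm_G_C 1 1 one"
    using norm_G_C_upper[where m = 1 and n = 1 and d = 1 and x = one and y = one and M = one]
    by (simp add: one_def cvnorm_def cinner_def)
  moreover have "norm_inf1_C 1 1 one = 1"
  proof -
    have "{cmod (\<Sum>i<1. \<Sum>j<1. one i j * cnj (eps i) * dlt j) | eps dlt.
        (\<forall>i<1. cmod (eps i) = 1) \<and> (\<forall>j<1. cmod (dlt j) = 1)} = {1}"
      by (auto simp: one_def norm_mult intro!: exI[of _ "\<lambda>_. 1"])
    then show ?thesis
      by (simp add: norm_inf1_C_def)
  qed
  ultimately show ?thesis
    using assms by (metis mult.right_neutral order_trans)
qed

lemma exists_unit_mult_eq_cmod:
  obtains u :: complex where "cmod u = 1" "u * w = cmod w"
proof (cases "w = 0")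
  case True
  then show ?thesis by (intro that[of 1]) simp_all
next
  case False
  moreover have "cnj w * w = cmod w * cmod w"
    using complex_norm_square[of w] by (simp add: mult.commute power2_eq_square)
  ultimately show ?thesis
    by (intro that[of "cnj w / cmod w"]) (simp_all add: norm_divide)
qed

definition qrep :: "quat \<Rightarrow> nat \<Rightarrow> nat \<Rightarrow> complex" where
  "qrep q s t = (if s = 0 then if t = 0 then qfst q else - cnj (qsnd q)
                 else if t = 0 then qsnd q else cnj (qfst q))"

definition cvec :: "(nat \<Rightarrow> quat) \<Rightarrow> nat \<Rightarrow> nat \<Rightarrow> complex" where
  "cvec u s k = qrep (u (k div 2)) s (k mod 2)"

(* Entry (2i + s, 2j + t) of cmat M is entry (s, t) of the complex matrix of M i j. Applied to the
   matrix whose rows are the vectors x i of H^d, its rows 2i and 2i + 1 represent x i in C^(2d). *)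
definition cmat :: "(nat \<Rightarrow> nat \<Rightarrow> quat) \<Rightarrow> nat \<Rightarrow> nat \<Rightarrow> complex" where
  "cmat M i = cvec (M (i div 2)) (i mod 2)"

lemma sum_lessThan_double:
  fixes m :: nat
  shows "(\<Sum>i<2 * m. f i) = (\<Sum>i<m. \<Sum>s<2. f (2 * i + s))"
  by (induction m) (simp_all add: numeral_2_eq_2 algebra_simps)

lemma cvec_at_pair [simp]: "t < 2 \<Longrightarrow> cvec u s (2 * k + t) = qrep (u k) s t"
  by (simp add: cvec_def)

lemma cmat_at_pair [simp]: "s < 2 \<Longrightarrow> cmat M (2 * i + s) = cvec (M i) s"
  by (simp add: cmat_def)

lemma cinner_cvec:
  "cinner (2 * d) (cvec u s) (cvec v t) = (\<Sum>k<d. \<Sum>r<2. cnj (qrep (u k) s r) * qrep (v k) t r)"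
  by (simp add: cinner_def sum_lessThan_double)

lemma Re_qrep_column:
  assumes "r < 2"
  shows "Re (\<Sum>s<2. \<Sum>t<2. qrep a s t * (cnj (qrep p s r) * qrep q t r))
    = qre (qmult a (qmult (qcnj p) q))"
proof -
  have "r = 0 \<or> r = 1" using assms by auto
  then show ?thesis
    by (elim disjE) (simp_all add: qrep_def qfst_def qsnd_def qmult_components qcnj_components
        numeral_2_eq_2 algebra_simps)
qed

lemma Re_qrep_pairing:
  "Re (\<Sum>s<2. \<Sum>t<2. qrep a s t * (\<Sum>r<2. cnj (qrep p s r) * qrep q t r))
    = 2 * qre (qmult a (qmult (qcnj p) q))"
proof -
  have "Re (\<Sum>s<2. \<Sum>t<2. qrep a s t * (\<Sum>r<2. cnj (qrep p s r) * qrep q t r))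
      = Re (\<Sum>r<2. \<Sum>s<2. \<Sum>t<2. qrep a s t * (cnj (qrep p s r) * qrep q t r))"
    by (simp add: numeral_2_eq_2 algebra_simps)
  also have "\<dots> = (\<Sum>r<2. Re (\<Sum>s<2. \<Sum>t<2. qrep a s t * (cnj (qrep p s r) * qrep q t r)))"
    by (rule Re_sum)
  also have "\<dots> = (\<Sum>r<2::nat. qre (qmult a (qmult (qcnj p) q)))"
    using Re_qrep_column by (intro sum.cong) auto
  also have "\<dots> = 2 * qre (qmult a (qmult (qcnj p) q))"
    by simp
  finally show ?thesis .
qed

lemma Re_cinner_cvec_pairing:
  "Re (\<Sum>s<2. \<Sum>t<2. qrep a s t * cinner (2 * d) (cvec u s) (cvec v t))
    = 2 * qre (qmult a (qinner d u v))"
proof -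
  have "Re (\<Sum>s<2. \<Sum>t<2. qrep a s t * cinner (2 * d) (cvec u s) (cvec v t))
      = Re (\<Sum>k<d. \<Sum>s<2. \<Sum>t<2. qrep a s t * (\<Sum>r<2. cnj (qrep (u k) s r) * qrep (v k) t r))"
    unfolding cinner_cvec sum_distrib_left by (simp only: sum.swap[where B = "{..<d}"])
  also have "\<dots> = (\<Sum>k<d. Re (\<Sum>s<2. \<Sum>t<2. qrep a s t * (\<Sum>r<2. cnj (qrep (u k) s r) * qrep (v k) t r)))"
    by (rule Re_sum)
  also have "\<dots> = (\<Sum>k<d. 2 * qre (qmult a (qmult (qcnj (u k)) (v k))))"
    by (simp only: Re_qrep_pairing)
  also have "\<dots> = 2 * qre (qmult a (qinner d u v))"
    unfolding qinner_def qmult_qsum_right qsum_components sum_distrib_left ..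
  finally show ?thesis .
qed

lemma Re_G_sum_cmat:
  "Re (\<Sum>i<2 * m. \<Sum>j<2 * n. cmat M i j * cinner (2 * d) (cmat x i) (cmat y j))
    = 2 * qre (qsum (\<lambda>(i, j). qmult (M i j) (qinner d (x i) (y j))) ({..<m} \<times> {..<n}))"
proof -
  have "Re (\<Sum>i<2 * m. \<Sum>j<2 * n. cmat M i j * cinner (2 * d) (cmat x i) (cmat y j))
      = Re (\<Sum>i<m. \<Sum>j<n. \<Sum>s<2. \<Sum>t<2.
          qrep (M i j) s t * cinner (2 * d) (cvec (x i) s) (cvec (y j) t))"
    by (simp add: sum_lessThan_double sum.swap[where B = "{..<n}"])
  also have "\<dots> = (\<Sum>i<m. \<Sum>j<n. 2 * qre (qmult (M i j) (qinner d (x i) (y j))))"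
    by (simp only: Re_sum[of _ "{..<m}"] Re_sum[of _ "{..<n}"] Re_cinner_cvec_pairing)
  also have "\<dots> = 2 * qre (qsum (\<lambda>(i, j). qmult (M i j) (qinner d (x i) (y j))) ({..<m} \<times> {..<n}))"
    unfolding qsum_components sum_distrib_left by (simp add: sum.cartesian_product case_prod_beta)
  finally show ?thesis .
qed

lemma qrep_row_cinner_self:
  assumes "s < 2"
  shows "(\<Sum>r<2. cnj (qrep q s r) * qrep q s r) = of_real (qre (qmult (qcnj q) q))"
proof -
  have "s = 0 \<or> s = 1" using assms by auto
  then show ?thesis
    by (elim disjE) (simp_all add: qrep_def qfst_def qsnd_def qmult_components qcnj_components
        numeral_2_eq_2 complex_eq_iff power2_eq_square)
qed

lemma cvnorm_cvec:
  assumes "s < 2"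
  shows "cvnorm (2 * d) (cvec u s) = qvnorm d u"
  unfolding cvnorm_def qvnorm_def cinner_cvec qinner_def qrep_row_cinner_self[OF assms]
  by (simp add: qsum_components)

definition qcol :: "(nat \<Rightarrow> complex) \<Rightarrow> quat" where
  "qcol z = Quat (Re (z 0)) (Im (z 0)) (Re (z 1)) (Im (z 1))"

lemma qrep_qcol: "s < 2 \<Longrightarrow> qrep (qcol z) s 0 = z s"
  by (auto simp: qrep_def qfst_def qsnd_def qcol_def less_2_cases_iff)

lemma qnorm_qcol: "qnorm (qcol z) = norm (z 0, z 1)"
  by (simp add: qnorm_eq_norm_pair qfst_def qsnd_def qcol_def)

lemma Re_inf1_sum_cmat_le:
  assumes e: "\<forall>i<2 * m. cmod (e i) = 1" and g: "\<forall>j<2 * n. cmod (g j) = 1"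
  shows "Re (\<Sum>i<2 * m. \<Sum>j<2 * n. cmat M i j * cnj (e i) * g j) \<le> 2 * norm_inf1_H m n M"
proof -
  define P where "P i = qcol (\<lambda>s. e (2 * i + s) / sqrt 2)" for i
  define Q where "Q j = qcol (\<lambda>t. g (2 * j + t) / sqrt 2)" for j
  have sqrt2: "complex_of_real (sqrt 2) * complex_of_real (sqrt 2) = 2"
    by (simp flip: of_real_mult)
  have Re_double: "Re (2 * z) = 2 * Re z" for z
    by simp
  have unit: "\<forall>i<m. qnorm (P i) = 1" "\<forall>j<n. qnorm (Q j) = 1"
    using e g by (auto simp: P_def Q_def qnorm_qcol norm_prod_def norm_divide power_divide)
  let ?S = "qsum (\<lambda>(i, j). qmult (qmult (M i j) (qcnj (P i))) (Q j)) ({..<m} \<times> {..<n})"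
  have "(\<Sum>i<2 * m. \<Sum>j<2 * n. cmat M i j * cnj (e i) * g j)
      = (\<Sum>i<m. \<Sum>j<n. \<Sum>s<2. \<Sum>t<2.
          qrep (M i j) s t * (cnj (e (2 * i + s)) * g (2 * j + t)))"
    by (simp add: sum_lessThan_double sum.swap[where B = "{..<n}"] mult.assoc)
  also have "\<dots> = (\<Sum>i<m. \<Sum>j<n. 2 * (\<Sum>s<2. \<Sum>t<2.
          qrep (M i j) s t * (cnj (qrep (P i) s 0) * qrep (Q j) t 0)))"
    by (simp add: P_def Q_def qrep_qcol sqrt2 sum_distrib_left)
  finally have "Re (\<Sum>i<2 * m. \<Sum>j<2 * n. cmat M i j * cnj (e i) * g j)
      = (\<Sum>i<m. \<Sum>j<n. 2 * qre (qmult (M i j) (qmult (qcnj (P i)) (Q j))))"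
    by (simp only: Re_sum[of _ "{..<m}"] Re_sum[of _ "{..<n}"] Re_double Re_qrep_column
        zero_less_numeral)
  also have "\<dots> = 2 * qre ?S"
    unfolding qsum_components sum_distrib_left qmult_assoc
    by (simp add: sum.cartesian_product case_prod_beta)
  also have "\<dots> \<le> 2 * qnorm ?S"
    by (intro mult_left_mono order_trans[OF abs_ge_self abs_qre_le_qnorm]) simp
  also have "\<dots> \<le> 2 * norm_inf1_H m n M"
    using norm_inf1_H_upper[OF unit] by simp
  finally show ?thesis .
qed

lemma cmod_inf1_sum_cmat_le:
  assumes e: "\<forall>i<2 * m. cmod (e i) = 1" and g: "\<forall>j<2 * n. cmod (g j) = 1"
  shows "cmod (\<Sum>i<2 * m. \<Sum>j<2 * n. cmat M i j * cnj (e i) * g j) \<le> 2 * norm_inf1_H m n M"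
proof -
  let ?w = "\<Sum>i<2 * m. \<Sum>j<2 * n. cmat M i j * cnj (e i) * g j"
  obtain u where u: "cmod u = 1" "u * ?w = cmod ?w"
    by (rule exists_unit_mult_eq_cmod)
  have "cmod ?w = Re (\<Sum>i<2 * m. \<Sum>j<2 * n. cmat M i j * cnj (e i) * (u * g j))"
    using u(2) by (simp add: sum_distrib_left mult_ac flip: Re_sum)
  also have "\<dots> \<le> 2 * norm_inf1_H m n M"
    using e g u(1) by (intro Re_inf1_sum_cmat_le) (simp_all add: norm_mult)
  finally show ?thesis .
qed

lemma norm_inf1_C_cmat_le: "norm_inf1_C (2 * m) (2 * n) (cmat M) \<le> 2 * norm_inf1_H m n M"
  unfolding norm_inf1_C_def
  by (rule cSup_least) (auto intro: cmod_inf1_sum_cmat_le intro!: exI[of _ "\<lambda>_. 1"])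

lemma qre_G_sum_le:
  assumes K: "\<forall>m n M. norm_G_C m n M \<le> K * norm_inf1_C m n M"
    and x: "\<forall>i<m. qvnorm d (x i) = 1" and y: "\<forall>j<n. qvnorm d (y j) = 1"
  shows "qre (qsum (\<lambda>(i, j). qmult (M i j) (qinner d (x i) (y j))) ({..<m} \<times> {..<n}))
    \<le> K * norm_inf1_H m n M"
proof -
  let ?z = "\<Sum>i<2 * m. \<Sum>j<2 * n. cmat M i j * cinner (2 * d) (cmat x i) (cmat y j)"
  have "0 \<le> K"
    using complex_Grothendieck_bound_ge_1[OF K] by simp
  have unit: "\<forall>i<2 * m. cvnorm (2 * d) (cmat x i) = 1" "\<forall>j<2 * n. cvnorm (2 * d) (cmat y j) = 1"
    using x y by (auto simp: cmat_def cvnorm_cvec less_mult_imp_div_less)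
  have "2 * qre (qsum (\<lambda>(i, j). qmult (M i j) (qinner d (x i) (y j))) ({..<m} \<times> {..<n})) = Re ?z"
    by (rule Re_G_sum_cmat[symmetric])
  also have "\<dots> \<le> cmod ?z"
    by (rule complex_Re_le_cmod)
  also have "\<dots> \<le> norm_G_C (2 * m) (2 * n) (cmat M)"
    using unit by (rule norm_G_C_upper)
  also have "\<dots> \<le> K * norm_inf1_C (2 * m) (2 * n) (cmat M)"
    using K by blast
  also have "\<dots> \<le> K * (2 * norm_inf1_H m n M)"
    using norm_inf1_C_cmat_le \<open>0 \<le> K\<close> by (rule mult_left_mono)
  finally show ?thesis
    by simp
qed

lemma qnorm_G_sum_le:
  assumes K: "\<forall>m n M. norm_G_C m n M \<le> K * norm_inf1_C m n M"
    and x: "\<forall>i<m. qvnorm d (x i) = 1" and y: "\<forall>j<n. qvnorm d (y j) = 1"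
  shows "qnorm (qsum (\<lambda>(i, j). qmult (M i j) (qinner d (x i) (y j))) ({..<m} \<times> {..<n}))
    \<le> K * norm_inf1_H m n M"
proof -
  let ?S = "qsum (\<lambda>(i, j). qmult (M i j) (qinner d (x i) (y j))) ({..<m} \<times> {..<n})"
  obtain u where u: "qnorm u = 1" "qre (qmult u ?S) = qnorm ?S"
    by (rule exists_unit_qre_qmult_eq_qnorm)
  have "qmult u ?S
      = qsum (\<lambda>(i, j). qmult (qmult u (M i j)) (qinner d (x i) (y j))) ({..<m} \<times> {..<n})"
    by (simp add: qmult_qsum_right qmult_assoc case_prod_unfold)
  then have "qnorm ?S \<le> K * norm_inf1_H m n (\<lambda>i j. qmult u (M i j))"
    using qre_G_sum_le[OF K x y, of "\<lambda>i j. qmult u (M i j)"] u(2) by simp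
  then show ?thesis
    by (simp add: norm_inf1_H_qmult_unit u(1))
qed

lemma qvnorm_one: "qvnorm 1 (\<lambda>_. Quat 1 0 0 0) = 1"
  by (simp add: qvnorm_def qinner_def qsum_components qmult_components qcnj_components)

lemma norm_G_H_le:
  assumes "\<forall>m n M. norm_G_C m n M \<le> K * norm_inf1_C m n M"
  shows "norm_G_H m n M \<le> K * norm_inf1_H m n M"
  unfolding norm_G_H_def
  by (rule cSup_least)
    (use qvnorm_one in \<open>auto intro!: exI[of _ "1::nat"] exI[of _ "\<lambda>_ _. Quat 1 0 0 0"]
      qnorm_G_sum_le[OF assms]\<close>)

theorem mainTheorem1:
  shows "KG_H \<le> KG_C"
  unfolding KG_H_def KG_C_def
  by (rule Inf_superset_mono) (use norm_G_H_le in blast)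

end
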